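(* Let $\{a_n\}_{n\ge1}$ be complex numbers with $\sum_{n=1}^\infty|a_n|^2(\log n)^3<\infty$, and for $t\in[0,1]$ let $f_t(z)=\sum_{n=1}^\infty r_n(t)a_nz^n$ ($z\in\mathbb D$). Then for almost every $t\in[0,1]$, $$\int_0^1(1-r)\left(\log\frac{1}{1-r}\right)^2\left[M_\infty(r,f_t')\right]^2\,dr<\infty.$$
   Context: $\mathbb D$ is the open unit disc and $M_\infty(r,f)=\max_{|z|=r}|f(z)|$. The Rademacher functions are $r_0(t)=1$ on $(0,1/2)$, $-1$ on $(1/2,1)$, $0$ at $t=0,1/2,1$, and $r_n(t)=r_0(2^nt)$ (extended 1-periodically) for $n\ge1$. *)

theory Defs
  imports "HOL-Analysis.Analysis"
begin

definition rad0 :: "real \<Rightarrow> real" where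
  "rad0 x = (let y = frac x in if 0 < y \<and> y < 1/2 then 1 else if 1/2 < y then -1 else 0)"

definition rademacher :: "nat \<Rightarrow> real \<Rightarrow> real" where
  "rademacher n t = rad0 (2 ^ n * t)"

definition Minf :: "real \<Rightarrow> (complex \<Rightarrow> complex) \<Rightarrow> real" where
  "Minf r g = Sup ((\<lambda>z. norm (g z)) ` {z. norm z = r})"

definition rad_series :: "(nat \<Rightarrow> complex) \<Rightarrow> real \<Rightarrow> complex \<Rightarrow> complex" where
  "rad_series a t z = (\<Sum>n. of_real (rademacher (Suc n) t) * a (Suc n) * z ^ Suc n)"

end

theory Submission
  imports Defs "HOL-Probability.Hoeffding"
begin

text \<open>Split (0,1) into the dyadic intervals I_k = [1 - 2^-k, 1 - 2^-(k+1)). For r in I_k the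
  values of f_t' on the circle |z| = r are, up to an error O(sup |a_n|), those of the truncation of
  degree N = 16^(k+1) at the N^3 points r w with w^(N^3) = 1. By Bernoulli's inequality the square
  of the largest of these 2^(p-1) values (p = 12k + 13) is at most a level s ~ p sigma_k(r) plus a
  sum of their 2p-th powers, where sigma_k(r) = sum_{n<N} |n a_n|^2 r^(2n). Khintchine's inequality
  with the sub-Gaussian constant bounds the t-mean of each 2p-th power by 4 (4 e p sigma)^p, which
  the level absorbs together with the number of grid points. So the t-mean of the integral over
  I_k is O(k^3 4^-k (sigma_k(1 - 2^-(k+1)) + 1)); summing over k, each |n a_n|^2 collects the weight
  O((log n)^3 / n^2). The hypothesis thus makes the t-integral of the r-integral finite, and
  Tonelli's theorem gives finiteness for almost every t.\<close>

section \<open>Rademacher functions\<close>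

abbreviation unit_mean :: "(real \<Rightarrow> ennreal) \<Rightarrow> ennreal" where
  "unit_mean F \<equiv> \<integral>\<^sup>+t. indicator {0..<1} t * F t \<partial>lborel"

lemma rad0_abs_le: "\<bar>rad0 x\<bar> \<le> 1"
  by (simp add: rad0_def Let_def)

lemma rad0_add_half: "rad0 (x + 1/2) = - rad0 x"
proof -
  have "frac (x + 1/2) = (if frac x < 1/2 then frac x + 1/2 else frac x - 1/2)"
    using frac_add[of x "1/2"] frac_lt_1[of x] by (simp add: frac_eq)
  then show ?thesis
    using frac_lt_1[of x] frac_ge_0[of x] unfolding rad0_def Let_def by auto
qed

lemma rad0_add_of_int: "rad0 (x + of_int k) = rad0 x"
  by (simp add: rad0_def frac_add_of_int_right)

lemma rademacher_add_dyadic: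
  assumes "m < n"
  shows "rademacher n (t + 1/2^Suc m) = rademacher n t"
proof -
  have "(2::real)^n / 2^Suc m = 2^(n - Suc m)"
    using assms by (simp add: power_diff)
  then have "(2::real)^n * (t + 1/2^Suc m) = 2^n * t + of_int (2^(n - Suc m))"
    by (simp add: algebra_simps)
  then show ?thesis
    unfolding rademacher_def using rad0_add_of_int[of "2^n * t" "2^(n - Suc m)"] by simp
qed

lemma rademacher_add_dyadic_self: "rademacher m (t + 1/2^Suc m) = - rademacher m t"
proof -
  have "(2::real)^m * (t + 1/2^Suc m) = 2^m * t + 1/2"
    by (simp add: algebra_simps)
  then show ?thesis unfolding rademacher_def by (simp add: rad0_add_half)
qed

lemma rademacher_add_one: "rademacher n (t + 1) = rademacher n t"
proof -
  have "(2::real)^n * (t + 1) = 2^n * t + of_int (2^n)"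
    by (simp add: algebra_simps)
  then show ?thesis
    unfolding rademacher_def using rad0_add_of_int[of "2^n * t" "2^n"] by simp
qed

lemma rademacher_abs_le: "\<bar>rademacher n t\<bar> \<le> 1"
  by (simp add: rademacher_def rad0_abs_le)

lemma rad0_measurable [measurable]: "rad0 \<in> borel_measurable borel"
  unfolding rad0_def Let_def frac_def by measurable

lemma rademacher_measurable [measurable]: "rademacher n \<in> borel_measurable borel"
  unfolding rademacher_def by measurable

lemma unit_mean_shift:
  fixes F :: "real \<Rightarrow> ennreal"
  assumes [measurable]: "F \<in> borel_measurable borel"
    and periodic: "\<And>t. F (t + 1) = F t" and h: "0 \<le> h" "h \<le> 1"
  shows "unit_mean (\<lambda>t. F (t + h)) = unit_mean F"
proof -
  have translate: "(\<integral>\<^sup>+t. indicator {a - h..<b - h} t * F (t + h) \<partial>lborel)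
      = (\<integral>\<^sup>+u. indicator {a..<b} u * F u \<partial>lborel)" for a b
    using nn_integral_real_affine[of "\<lambda>u. indicator {a..<b} u * F u" 1 h]
    by (simp add: indicator_def add.commute algebra_simps)
  have wrap: "(\<integral>\<^sup>+u. indicator {1..<1 + h} u * F u \<partial>lborel)
      = (\<integral>\<^sup>+u. indicator {0..<h} u * F u \<partial>lborel)"
    using nn_integral_real_affine[of "\<lambda>u. indicator {1..<1 + h} u * F u" 1 1]
    by (simp add: indicator_def add.commute periodic)
  have "unit_mean (\<lambda>t. F (t + h))
      = (\<integral>\<^sup>+t. indicator {0..<1 - h} t * F (t + h) + indicator {1 - h..<1} t * F (t + h) \<partial>lborel)"
    using h by (intro nn_integral_cong) (auto simp: indicator_def)
  also have "\<dots> = (\<integral>\<^sup>+u. indicator {h..<1} u * F u \<partial>lborel) + (\<integral>\<^sup>+u. indicator {0..<h} u * F u \<partial>lborel)"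
    using translate[of h 1] translate[of 1 "1 + h"] wrap by (subst nn_integral_add) auto
  also have "\<dots> = (\<integral>\<^sup>+u. indicator {h..<1} u * F u + indicator {0..<h} u * F u \<partial>lborel)"
    by (rule nn_integral_add[symmetric]) auto
  also have "\<dots> = unit_mean F"
    using h by (intro nn_integral_cong) (auto simp: indicator_def)
  finally show ?thesis .
qed

section \<open>Sub-Gaussian moments of Rademacher sums\<close>

lemma cosh_mult_le_cosh:
  fixes v e :: real
  assumes "\<bar>e\<bar> \<le> 1"
  shows "cosh (v * e) \<le> cosh v"
proof -
  have "\<bar>v * e\<bar> \<le> \<bar>v\<bar>" using assms by (simp add: abs_mult mult_left_le)
  then have "cosh \<bar>v * e\<bar> \<le> cosh \<bar>v\<bar>" by (subst cosh_real_nonneg_le_iff) auto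
  then show ?thesis by (simp only: cosh_real_abs)
qed

lemma unit_mean_exp_rademacher_sum_le:
  assumes "finite S"
  shows "unit_mean (\<lambda>t. ennreal (exp (\<Sum>n\<in>S. v n * rademacher n t))) \<le> ennreal (\<Prod>n\<in>S. cosh (v n))"
  using assms
proof (induction S rule: finite_linorder_min_induct)
  case empty
  then show ?case by simp
next
  case (insert b A)
  define h :: real where "h = 1/2^Suc b"
  have "(1::real) \<le> 2^Suc b" by (rule one_le_power) simp
  then have h: "0 \<le> h" "h \<le> 1" by (auto simp: h_def)
  define G where "G t = exp (\<Sum>n\<in>A. v n * rademacher n t)" for t
  define F where "F t = ennreal (exp (v b * rademacher b t) * G t)" for t
  have [measurable]: "F \<in> borel_measurable borel" unfolding F_def G_def by measurable
  have "b \<notin> A" using insert by auto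
  have F_insert: "ennreal (exp (\<Sum>n\<in>insert b A. v n * rademacher n t)) = F t" for t
    using insert \<open>b \<notin> A\<close> by (simp add: F_def G_def exp_add)
  have "rademacher n (t + h) = rademacher n t" if "n \<in> A" for n t
    unfolding h_def using insert that by (intro rademacher_add_dyadic) auto
  then have G_shift: "G (t + h) = G t" for t
    unfolding G_def by simp
  have F_plus_shift: "F t + F (t + h) = ennreal (2 * cosh (v b * rademacher b t) * G t)" for t
    unfolding F_def G_shift unfolding h_def rademacher_add_dyadic_self
    by (subst ennreal_plus[symmetric]) (auto simp: G_def cosh_def algebra_simps)
  have G_nonneg: "0 \<le> G t" for t unfolding G_def by simp
  define P where "P = (\<Prod>n\<in>A. cosh (v n))"
  have P_nonneg: "0 \<le> P" unfolding P_def by (intro prod_nonneg) (auto intro: less_imp_le cosh_real_pos)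
  have "2 * unit_mean F = unit_mean F + unit_mean (\<lambda>t. F (t + h))"
    using unit_mean_shift[of F h] h by (simp add: mult_2 rademacher_add_one F_def G_def)
  also have "\<dots> = unit_mean (\<lambda>t. F t + F (t + h))"
    by (subst nn_integral_add[symmetric]) (auto simp: distrib_left)
  also have "\<dots> \<le> (\<integral>\<^sup>+t. ennreal (2 * cosh (v b)) * (indicator {0..<1} t * ennreal (G t)) \<partial>lborel)"
  proof (intro nn_integral_mono)
    fix t
    have "2 * cosh (v b * rademacher b t) * G t \<le> 2 * cosh (v b) * G t"
      using cosh_mult_le_cosh[OF rademacher_abs_le, of "v b" b t] G_nonneg by (intro mult_right_mono) auto
    then show "indicator {0..<1} t * (F t + F (t + h)) \<le> ennreal (2 * cosh (v b)) * (indicator {0..<1} t * ennreal (G t))"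
      unfolding F_plus_shift using G_nonneg
      by (auto simp: indicator_def ennreal_mult'[symmetric] intro: ennreal_leI)
  qed
  also have "\<dots> = ennreal (2 * cosh (v b)) * unit_mean (\<lambda>t. ennreal (G t))"
    by (rule nn_integral_cmult) (auto simp: G_def)
  also have "\<dots> \<le> ennreal (2 * cosh (v b)) * ennreal P"
    using insert.IH unfolding G_def P_def by (intro mult_left_mono) auto
  also have "\<dots> = ennreal (2 * (cosh (v b) * P))"
    using P_nonneg cosh_real_pos[of "v b"] by (simp add: ennreal_mult[symmetric] mult.assoc)
  also have "\<dots> = 2 * ennreal (cosh (v b) * P)"
    using P_nonneg cosh_real_pos[of "v b"] by (simp add: ennreal_mult)
  finally have "unit_mean F \<le> ennreal (cosh (v b) * P)"
    by (simp add: ennreal_mult_le_mult_iff)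
  then show ?case
    unfolding F_insert P_def using insert \<open>b \<notin> A\<close> by simp
qed

lemma cosh_le_exp_half_square: "cosh (x::real) \<le> exp (x\<^sup>2/2)"
proof -
  have "cosh y \<le> exp (y\<^sup>2/2)" if y: "y \<ge> 0" for y :: real
  proof -
    text \<open>Hoeffding's lemma for a symmetric \<open>\<plusminus>y\<close> variable.\<close>
    have "-(2*y) * (1/2) + ln (1 + (1/2) * (exp (2*y) - 1)) \<le> (2*y)\<^sup>2/8"
      using Hoeffdings_lemma_aux[of "2*y" "1/2"] y by simp
    moreover have "1 + (1/2) * (exp (2*y) - 1) = exp y * cosh y"
      by (simp add: cosh_def field_simps exp_add[symmetric])
    moreover have "ln (exp y * cosh y) = y + ln (cosh y)"
      by (simp add: ln_mult cosh_real_pos)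
    ultimately have "ln (cosh y) \<le> y\<^sup>2/2" by (simp add: power2_eq_square)
    then show ?thesis by (metis cosh_real_pos exp_le_cancel_iff exp_ln)
  qed
  from this[of "\<bar>x\<bar>"] show ?thesis by (simp add: cosh_real_abs)
qed

lemma unit_mean_exp_rademacher_sum_subgaussian:
  assumes "finite S"
  shows "unit_mean (\<lambda>t. ennreal (exp (\<Sum>n\<in>S. v n * rademacher n t))) \<le> ennreal (exp ((\<Sum>n\<in>S. (v n)\<^sup>2) / 2))"
proof -
  have "(\<Prod>n\<in>S. cosh (v n)) \<le> (\<Prod>n\<in>S. exp ((v n)\<^sup>2/2))"
    by (intro prod_mono) (auto simp: cosh_le_exp_half_square cosh_real_pos less_imp_le)
  also have "\<dots> = exp ((\<Sum>n\<in>S. (v n)\<^sup>2) / 2)"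
    using assms by (simp add: exp_sum sum_divide_distrib)
  finally show ?thesis
    using unit_mean_exp_rademacher_sum_le[OF assms, of v] order_trans ennreal_leI by blast
qed

lemma power_le_exp:
  fixes y :: real
  assumes "0 \<le> y" "0 < q"
  shows "y ^ q \<le> real q ^ q * exp y"
proof -
  have "(y / q) ^ q \<le> (1 + y / q) ^ q"
    using assms by (intro power_mono) auto
  also have "\<dots> \<le> exp (y / q) ^ q"
    using assms by (intro power_mono) (auto simp: exp_ge_add_one_self)
  also have "\<dots> = exp y"
    using assms by (simp add: exp_of_nat_mult[symmetric])
  finally have "real q ^ q * (y / q) ^ q \<le> real q ^ q * exp y" by (intro mult_left_mono) auto
  then show ?thesis using assms by (simp add: power_divide)
qed

lemma even_power_le_exp_plus_exp:
  fixes y l :: real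
  assumes "0 < l" "0 < p"
  shows "y ^ (2*p) \<le> real (2*p) ^ (2*p) / l ^ (2*p) * (exp (l * y) + exp (- (l * y)))"
proof -
  have "(l * \<bar>y\<bar>) ^ (2*p) \<le> real (2*p) ^ (2*p) * exp (l * \<bar>y\<bar>)"
    using assms by (intro power_le_exp) auto
  also have "exp (l * \<bar>y\<bar>) \<le> exp (l * y) + exp (- (l * y))"
    using assms by (cases "y \<ge> 0") (auto simp: add_increasing add_increasing2)
  finally have "(l * \<bar>y\<bar>) ^ (2*p) \<le> real (2*p) ^ (2*p) * (exp (l * y) + exp (- (l * y)))"
    by (simp add: mult_left_mono)
  moreover have "y ^ (2*p) = (l * \<bar>y\<bar>) ^ (2*p) / l ^ (2*p)"
    using assms by (simp add: power_mult_distrib power_even_abs)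
  ultimately show ?thesis
    using assms by (simp add: divide_right_mono)
qed

lemma unit_mean_le_scaled_sum:
  fixes X Y Z :: "real \<Rightarrow> real"
  assumes [measurable]: "X \<in> borel_measurable borel" "Y \<in> borel_measurable borel"
    and Z: "\<And>t. Z t \<le> c * (X t + Y t)" and "0 \<le> c" "\<And>t. 0 \<le> X t" "\<And>t. 0 \<le> Y t"
  shows "unit_mean (\<lambda>t. ennreal (Z t))
    \<le> ennreal c * (unit_mean (\<lambda>t. ennreal (X t)) + unit_mean (\<lambda>t. ennreal (Y t)))"
proof -
  have "unit_mean (\<lambda>t. ennreal (Z t))
      \<le> (\<integral>\<^sup>+t. ennreal c * (indicator {0..<1} t * ennreal (X t) + indicator {0..<1} t * ennreal (Y t)) \<partial>lborel)"
  proof (intro nn_integral_mono)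
    fix t
    have "ennreal (Z t) \<le> ennreal (c * (X t + Y t))" using Z by (rule ennreal_leI)
    also have "\<dots> = ennreal c * (ennreal (X t) + ennreal (Y t))"
      using assms by (simp add: ennreal_mult ennreal_plus)
    finally show "indicator {0..<1} t * ennreal (Z t)
        \<le> ennreal c * (indicator {0..<1} t * ennreal (X t) + indicator {0..<1} t * ennreal (Y t))"
      by (auto simp: indicator_def)
  qed
  also have "\<dots> = ennreal c * (unit_mean (\<lambda>t. ennreal (X t)) + unit_mean (\<lambda>t. ennreal (Y t)))"
    by (subst nn_integral_cmult) (auto simp: nn_integral_add)
  finally show ?thesis .
qed

lemma unit_mean_rademacher_sum_even_power_le:
  assumes S: "finite S" and p: "0 < p"
  shows "unit_mean (\<lambda>t. ennreal ((\<Sum>n\<in>S. u n * rademacher n t) ^ (2*p)))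
     \<le> ennreal (2 * (2 * exp 1 * p * (\<Sum>n\<in>S. (u n)\<^sup>2)) ^ p)"
proof (cases "(\<Sum>n\<in>S. (u n)\<^sup>2) = 0")
  case True
  then have "\<forall>n\<in>S. u n = 0" using S by (subst (asm) sum_nonneg_eq_0_iff) auto
  moreover have "0 < 2 * p" using p by simp
  ultimately show ?thesis using p True by (simp add: zero_power)
next
  case False
  define \<sigma> where "\<sigma> = (\<Sum>n\<in>S. (u n)\<^sup>2)"
  have \<sigma>: "\<sigma> > 0" using False unfolding \<sigma>_def by (metis order_le_neq_trans sum_nonneg zero_le_power2)
  define l where "l = sqrt (2 * p / \<sigma>)"
  have l: "l > 0" "l\<^sup>2 = 2 * p / \<sigma>" using \<sigma> p by (auto simp: l_def)
  define c where "c = real (2*p) ^ (2*p) / l ^ (2*p)"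
  have c: "c = (2 * p * \<sigma>) ^ p"
  proof -
    have "c = ((2 * real p)\<^sup>2)^p / (l\<^sup>2)^p" unfolding c_def by (simp add: power_mult)
    also have "\<dots> = (2 * p * \<sigma>) ^ p"
      unfolding l(2) power_divide[symmetric] using \<sigma> p by (simp add: field_simps power2_eq_square)
    finally show ?thesis .
  qed
  define E where "E w = unit_mean (\<lambda>t. ennreal (exp (\<Sum>n\<in>S. (w * u n) * rademacher n t)))" for w
  have E: "E w \<le> ennreal (exp p)" if "w\<^sup>2 = l\<^sup>2" for w
  proof -
    have "(\<Sum>n\<in>S. (w * u n)\<^sup>2) = w\<^sup>2 * \<sigma>"
      unfolding \<sigma>_def by (simp add: power_mult_distrib sum_distrib_left)
    then have "(\<Sum>n\<in>S. (w * u n)\<^sup>2) / 2 = p"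
      using that l \<sigma> by simp
    then show ?thesis
      unfolding E_def using unit_mean_exp_rademacher_sum_subgaussian[OF S, of "\<lambda>n. w * u n"] by simp
  qed
  have lin: "(\<Sum>n\<in>S. (w * u n) * rademacher n t) = w * (\<Sum>n\<in>S. u n * rademacher n t)" for w t
    by (simp add: sum_distrib_left mult.assoc)
  have c_nonneg: "0 \<le> c" unfolding c by (simp add: \<sigma> less_imp_le)
  have "unit_mean (\<lambda>t. ennreal ((\<Sum>n\<in>S. u n * rademacher n t) ^ (2*p))) \<le> ennreal c * (E l + E (- l))"
    unfolding E_def
  proof (rule unit_mean_le_scaled_sum)
    show "(\<Sum>n\<in>S. u n * rademacher n t) ^ (2*p)
        \<le> c * (exp (\<Sum>n\<in>S. l * u n * rademacher n t) + exp (\<Sum>n\<in>S. - l * u n * rademacher n t))" for t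
      using even_power_le_exp_plus_exp[OF l(1) p, of "\<Sum>n\<in>S. u n * rademacher n t"] by (simp add: lin sum_negf c_def)
  qed (use c_nonneg in auto)
  also have "\<dots> \<le> ennreal c * (ennreal (exp p) + ennreal (exp p))"
    using E[of l] E[of "- l"] by (intro mult_left_mono add_mono) auto
  also have "\<dots> = ennreal (2 * (c * exp p))"
    using c_nonneg by (simp add: ennreal_mult ennreal_plus[symmetric] mult_2[symmetric] mult_ac)
  also have "exp (real p) = exp 1 ^ p" by (simp add: exp_of_nat_mult[symmetric])
  finally show ?thesis unfolding c \<sigma>_def by (simp add: power_mult_distrib mult_ac)
qed

lemma power_add_le_two_power:
  fixes a b :: real
  assumes "0 \<le> a" "0 \<le> b"
  shows "(a + b)^p \<le> 2^p * (a^p + b^p)"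
proof -
  have "(a + b)^p \<le> (2 * max a b)^p" using assms by (intro power_mono) auto
  also have "\<dots> = 2^p * (max a b)^p" by (simp add: power_mult_distrib)
  also have "(max a b)^p \<le> a^p + b^p" using assms by (auto simp: max_def)
  finally show ?thesis by (simp add: mult_left_mono)
qed

lemma unit_mean_complex_rademacher_sum_even_power_le:
  assumes S: "finite S" and p: "0 < p"
  shows "unit_mean (\<lambda>t. ennreal (cmod (\<Sum>n\<in>S. of_real (rademacher n t) * c n) ^ (2*p)))
     \<le> ennreal (4 * (4 * exp 1 * p * (\<Sum>n\<in>S. (cmod (c n))\<^sup>2)) ^ p)"
proof -
  define \<sigma> where "\<sigma> = (\<Sum>n\<in>S. (cmod (c n))\<^sup>2)"
  define R where "R t = (\<Sum>n\<in>S. Re (c n) * rademacher n t)" for t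
  define I where "I t = (\<Sum>n\<in>S. Im (c n) * rademacher n t)" for t
  define m where "m \<sigma>' = 2 * (2 * exp 1 * p * \<sigma>') ^ p" for \<sigma>'
  have m_mono: "m \<sigma>' \<le> m \<sigma>" if "0 \<le> \<sigma>'" "\<sigma>' \<le> \<sigma>" for \<sigma>'
    unfolding m_def using that by (intro mult_left_mono power_mono) auto
  have part: "unit_mean (\<lambda>t. ennreal ((\<Sum>n\<in>S. f (c n) * rademacher n t)^(2*p))) \<le> ennreal (m \<sigma>)"
    if f: "\<And>z. (f z)\<^sup>2 \<le> (cmod z)\<^sup>2" for f
  proof -
    have "unit_mean (\<lambda>t. ennreal ((\<Sum>n\<in>S. f (c n) * rademacher n t)^(2*p)))
        \<le> ennreal (m (\<Sum>n\<in>S. (f (c n))\<^sup>2))"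
      unfolding m_def by (rule unit_mean_rademacher_sum_even_power_le[OF S p])
    also have "\<dots> \<le> ennreal (m \<sigma>)"
      using f by (intro ennreal_leI m_mono) (auto simp: \<sigma>_def intro: sum_mono sum_nonneg)
    finally show ?thesis .
  qed
  have R: "unit_mean (\<lambda>t. ennreal ((R t)^(2*p))) \<le> ennreal (m \<sigma>)"
    unfolding R_def by (rule part) (simp add: cmod_power2)
  have I: "unit_mean (\<lambda>t. ennreal ((I t)^(2*p))) \<le> ennreal (m \<sigma>)"
    unfolding I_def by (rule part) (simp add: cmod_power2)
  have pointwise: "cmod (\<Sum>n\<in>S. of_real (rademacher n t) * c n) ^ (2*p) \<le> 2^p * ((R t)^(2*p) + (I t)^(2*p))" for t
  proof -
    let ?X = "\<Sum>n\<in>S. of_real (rademacher n t) * c n"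
    have "Re ?X = R t" "Im ?X = I t" unfolding R_def I_def by (auto simp: Re_sum Im_sum mult.commute)
    then have "cmod ?X ^ (2*p) = ((R t)\<^sup>2 + (I t)\<^sup>2)^p" by (simp add: cmod_power2 power_mult)
    also have "\<dots> \<le> 2^p * (((R t)\<^sup>2)^p + ((I t)\<^sup>2)^p)" by (rule power_add_le_two_power) auto
    finally show ?thesis by (simp add: power_mult)
  qed
  have "unit_mean (\<lambda>t. ennreal (cmod (\<Sum>n\<in>S. of_real (rademacher n t) * c n) ^ (2*p)))
      \<le> ennreal (2^p) * (unit_mean (\<lambda>t. ennreal ((R t)^(2*p))) + unit_mean (\<lambda>t. ennreal ((I t)^(2*p))))"
    unfolding R_def I_def
    by (rule unit_mean_le_scaled_sum) (use pointwise in \<open>auto simp: R_def I_def\<close>)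
  also have "\<dots> \<le> ennreal (2^p) * (ennreal (m \<sigma>) + ennreal (m \<sigma>))"
    using R I by (intro mult_left_mono add_mono) auto
  also have "\<dots> = ennreal (2^p * (2 * m \<sigma>))"
  proof -
    have "0 \<le> m \<sigma>" unfolding m_def \<sigma>_def by (simp add: sum_nonneg)
    then show ?thesis by (simp add: ennreal_mult ennreal_plus[symmetric] mult_2[symmetric])
  qed
  also have "2^p * (2 * m \<sigma>) = 4 * (4 * exp 1 * p * \<sigma>) ^ p"
  proof -
    have "(4::real)^p = 2^p * 2^p" by (simp add: power_mult_distrib[symmetric])
    then show ?thesis unfolding m_def by (simp add: power_mult_distrib)
  qed
  finally show ?thesis unfolding \<sigma>_def .
qed

lemma unit_mean_rademacher_partial_sum_even_power_le:
  assumes "0 < p"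
  shows "unit_mean (\<lambda>t. ennreal (cmod (\<Sum>n<N. of_real (rademacher (Suc n) t) * c n) ^ (2*p)))
     \<le> ennreal (4 * (4 * exp 1 * p * (\<Sum>n<N. (cmod (c n))\<^sup>2)) ^ p)"
  using unit_mean_complex_rademacher_sum_even_power_le[of "Suc ` {..<N}" p "\<lambda>m. c (m - 1)"] assms
  by (simp add: sum.reindex)

section \<open>The derivative on a circle\<close>

definition deriv_coeff :: "(nat \<Rightarrow> complex) \<Rightarrow> nat \<Rightarrow> complex" where
  "deriv_coeff a n = of_nat (Suc n) * a (Suc n)"

definition rad_series_deriv :: "(nat \<Rightarrow> complex) \<Rightarrow> real \<Rightarrow> complex \<Rightarrow> complex" where
  "rad_series_deriv a t z = (\<Sum>n. of_real (rademacher (Suc n) t) * deriv_coeff a n * z ^ n)"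

lemma summable_bounded_mult_power:
  fixes f :: "nat \<Rightarrow> 'a::{real_normed_field, banach}"
  assumes "\<And>n. norm (f n) \<le> B" "norm w < 1"
  shows "summable (\<lambda>n. f n * w ^ n)"
proof (rule summable_comparison_test')
  show "summable (\<lambda>n. B * norm w ^ n)" using assms by (intro summable_mult summable_geometric) auto
  show "norm (f n * w ^ n) \<le> B * norm w ^ n" for n
    using assms by (simp add: norm_mult norm_power mult_right_mono)
qed

lemma deriv_rad_series:
  assumes B: "\<And>n. norm (a (Suc n)) \<le> B" and z: "norm z < 1"
  shows "deriv (rad_series a t) z = rad_series_deriv a t z"
proof -
  define b where "b m = (if m = 0 then 0 else of_real (rademacher m t) * a m)" for m
  have "norm (b m) \<le> max B 0" for m
    using B[of "m - 1"] rademacher_abs_le[of m t]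
    by (cases m) (auto simp: b_def norm_mult intro: order_trans[OF mult_left_le_one_le] le_max_iff_disj)
  then have summable: "summable (\<lambda>m. b m * w ^ m)" if "norm w < 1" for w
    using summable_bounded_mult_power that by blast
  have eq: "rad_series a t w = (\<Sum>m. b m * w ^ m)" if "w \<in> ball 0 1" for w
    using suminf_split_head[OF summable] that unfolding rad_series_def by (simp add: b_def mult.assoc)
  have "((\<lambda>w. \<Sum>m. b m * w ^ m) has_field_derivative (\<Sum>n. diffs b n * z ^ n)) (at z)"
    by (rule termdiffs_strong'[of 1]) (use summable z in auto)
  then have "(rad_series a t has_field_derivative (\<Sum>n. diffs b n * z ^ n)) (at z)"
    by (rule has_field_derivative_transform_within_open[of _ _ _ "ball 0 1"]) (use z eq in auto)
  then have "deriv (rad_series a t) z = (\<Sum>n. diffs b n * z ^ n)" by (rule DERIV_imp_deriv)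
  also have "\<dots> = rad_series_deriv a t z"
    unfolding rad_series_deriv_def diffs_def b_def deriv_coeff_def by (simp add: mult_ac)
  finally show ?thesis .
qed

lemma Minf_square_le:
  assumes r: "0 \<le> r" and Q: "\<And>z. norm z = r \<Longrightarrow> (norm (g z))\<^sup>2 \<le> Q"
  shows "(Minf r g)\<^sup>2 \<le> Q"
proof -
  have r_circle: "norm (complex_of_real r) = r" using r by simp
  have Q_nonneg: "0 \<le> Q" using Q[OF r_circle] by (meson order_trans zero_le_power2)
  have le: "norm (g z) \<le> sqrt Q" if "norm z = r" for z
    using Q[OF that] by (simp add: real_le_rsqrt)
  have "Minf r g \<le> sqrt Q" unfolding Minf_def
    by (rule cSup_least) (use r_circle le in \<open>auto intro!: exI[of _ "complex_of_real r"]\<close>)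
  moreover have "norm (g (complex_of_real r)) \<le> Minf r g" unfolding Minf_def
    by (rule cSup_upper) (use r_circle le in \<open>auto intro!: bdd_aboveI[where M="sqrt Q"]\<close>)
  then have "0 \<le> Minf r g" by (meson norm_ge_zero order_trans)
  ultimately have "(Minf r g)\<^sup>2 \<le> (sqrt Q)\<^sup>2" by (intro power_mono) auto
  then show ?thesis using Q_nonneg by simp
qed

definition unit_root :: "nat \<Rightarrow> nat \<Rightarrow> complex" where
  "unit_root M j = exp (2 * pi * \<i> * of_nat j / of_nat M)"

lemma norm_unit_root [simp]: "norm (unit_root M j) = 1"
proof -
  have "2 * pi * \<i> * of_nat j / of_nat M = \<i> * complex_of_real (2 * pi * j / M)" by simp
  then show ?thesis unfolding unit_root_def by (simp only: norm_exp_i_times)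
qed

lemma norm_exp_i_diff_le: "cmod (exp (\<i> * of_real s) - exp (\<i> * of_real u)) \<le> \<bar>s - u\<bar>"
proof -
  have "exp (\<i> * of_real s) - exp (\<i> * of_real u) = exp (\<i> * of_real u) * (exp (\<i> * of_real (s - u)) - 1)"
    by (simp add: algebra_simps exp_add[symmetric])
  then have "cmod (exp (\<i> * of_real s) - exp (\<i> * of_real u)) = 2 * \<bar>sin ((s - u) / 2)\<bar>"
    using dist_exp_i_1[of "s - u"] by (simp add: norm_mult)
  also have "\<dots> \<le> 2 * \<bar>(s - u) / 2\<bar>" using abs_sin_x_le_abs_x[of "(s - u) / 2"] by linarith
  finally show ?thesis by simp
qed

lemma exists_unit_root_near:
  assumes r: "0 \<le> r" and M: "0 < M" and z: "norm z = r"
  shows "\<exists>j<M. norm (z - of_real r * unit_root M j) \<le> 2 * pi * r / M"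
proof -
  define \<theta> where "\<theta> = Arg2pi z"
  have \<theta>: "0 \<le> \<theta>" "\<theta> < 2 * pi" unfolding \<theta>_def by (auto simp: Arg2pi_ge_0 Arg2pi_lt_2pi)
  have z_polar: "z = of_real r * exp (\<i> * of_real \<theta>)" using Arg2pi_eq[of z] z unfolding \<theta>_def by simp
  define j where "j = nat \<lfloor>\<theta> * M / (2 * pi)\<rfloor>"
  have "0 \<le> \<lfloor>\<theta> * M / (2 * pi)\<rfloor>" using \<theta> M by simp
  then have j: "real j \<le> \<theta> * M / (2 * pi)" "\<theta> * M / (2 * pi) < real j + 1"
    unfolding j_def by linarith+
  moreover have "\<theta> * M / (2 * pi) < M" using \<theta> M by (simp add: field_simps)
  ultimately have "j < M" by linarith
  define \<phi> where "\<phi> = 2 * pi * j / M"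
  have \<phi>: "\<phi> \<le> \<theta>" "\<theta> < \<phi> + 2 * pi / M" using j M unfolding \<phi>_def by (auto simp: field_simps)
  have "unit_root M j = exp (\<i> * of_real \<phi>)" unfolding unit_root_def \<phi>_def by (simp add: mult_ac)
  then have "norm (z - of_real r * unit_root M j) = r * cmod (exp (\<i> * of_real \<theta>) - exp (\<i> * of_real \<phi>))"
    unfolding z_polar using r by (simp add: norm_mult right_diff_distrib[symmetric])
  also have "\<dots> \<le> r * \<bar>\<theta> - \<phi>\<bar>" using r norm_exp_i_diff_le by (intro mult_left_mono) auto
  also have "\<dots> \<le> r * (2 * pi / M)" using \<phi> r by (intro mult_left_mono) auto
  finally show ?thesis using \<open>j < M\<close> by (intro exI[of _ j]) (auto simp: mult_ac)
qed

definition grid_sum :: "(nat \<Rightarrow> complex) \<Rightarrow> nat \<Rightarrow> nat \<Rightarrow> real \<Rightarrow> nat \<Rightarrow> real \<Rightarrow> complex" where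
  "grid_sum a N M r j t =
     (\<Sum>n<N. of_real (rademacher (Suc n) t) * deriv_coeff a n * (of_real r * unit_root M j) ^ n)"

lemma Suc_mult_power_le_inverse_square:
  assumes r: "0 \<le> r" "r < 1" and k: "1/2^Suc k \<le> 1 - r" and n: "16^Suc k \<le> n"
  shows "real (Suc n) * r^n \<le> 2048 / (real (Suc n))\<^sup>2"
proof -
  define x where "x = 1 - r"
  have x: "0 < x" "1/2^Suc k \<le> x" using r k by (auto simp: x_def)
  have n1: "1 \<le> n" using n by (metis le_trans one_le_numeral one_le_power)
  have "r \<le> exp (-x)" using exp_ge_add_one_self[of "-x"] by (simp add: x_def)
  then have "r^n \<le> exp (-x)^n" using r by (intro power_mono) auto
  also have "\<dots> = exp (- (n * x))" by (simp add: exp_of_nat_mult[symmetric])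
  also have "\<dots> \<le> 256 / (n * x)^4"
    using power_le_exp[of "n * x" 4] x n1 by (simp add: exp_minus field_simps)
  finally have rn: "r^n \<le> 256 / (n * x)^4" .
  have "(real (Suc n))^3 \<le> (2 * real n)^3" using n1 by (intro power_mono) auto
  then have s3: "(real (Suc n))^3 \<le> 8 * (real n)^3" by (simp add: power_mult_distrib)
  have "(16::real)^Suc k = (2^4)^Suc k" by simp
  also have "\<dots> = (2^Suc k)^4" by (simp only: power_mult[symmetric] mult.commute)
  finally have "(1::real) = real (16^Suc k) * (1/2^Suc k)^4" by (simp add: power_divide)
  also have "\<dots> \<le> real n * x^4"
    using n x by (intro mult_mono power_mono) (auto simp del: of_nat_power)
  finally have nx: "1 \<le> real n * x^4" .
  have "(real (Suc n))^3 * r^n \<le> 8 * (real n)^3 * (256 / (n * x)^4)"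
    using s3 rn r by (intro mult_mono) auto
  also have "\<dots> = 2048 / (real n * x^4)"
    using x n1 by (simp add: field_simps power_mult_distrib power3_eq_cube power4_eq_xxxx)
  also have "\<dots> \<le> 2048" using nx by (simp add: divide_le_eq)
  finally have "real (Suc n) * r^n * (real (Suc n))\<^sup>2 \<le> 2048"
    by (simp add: power2_eq_square power3_eq_cube mult_ac)
  then show ?thesis by (subst pos_le_divide_eq) auto
qed

lemma norm_deriv_coeff_le:
  assumes "\<And>n. norm (a (Suc n)) \<le> B"
  shows "norm (deriv_coeff a n) \<le> real (Suc n) * B"
  unfolding deriv_coeff_def norm_mult norm_of_nat using assms[of n] by (intro mult_left_mono) auto

lemma norm_rad_series_deriv_tail_le:
  assumes B: "\<And>n. norm (a (Suc n)) \<le> B" and r: "0 \<le> r"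
    and tail: "\<And>n. N \<le> n \<Longrightarrow> real (Suc n) * r^n \<le> 2048 / (real (Suc n))\<^sup>2" and z: "norm z = r"
  shows "norm (rad_series_deriv a t z - (\<Sum>n<N. of_real (rademacher (Suc n) t) * deriv_coeff a n * z^n))
    \<le> 2048 * (pi\<^sup>2/6) * B"
proof -
  have B_nonneg: "0 \<le> B" using B[of 0] by (meson norm_ge_zero order_trans)
  define f where "f n = of_real (rademacher (Suc n) t) * deriv_coeff a n * z^n" for n
  define g where "g n = 2048 * B * (1 / real ((n + 1)\<^sup>2))" for n
  have g_sums: "g sums (2048 * (pi\<^sup>2/6) * B)"
    unfolding g_def using sums_mult[OF inverse_squares_sums, of "2048 * B"] by (simp add: mult_ac)
  have f_le: "norm (f n) \<le> g n" if "N \<le> n" for n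
  proof -
    have "norm (f n) \<le> 1 * (real (Suc n) * B) * r^n"
      unfolding f_def norm_mult norm_power z
      using rademacher_abs_le norm_deriv_coeff_le[of a B, OF B] r B_nonneg by (intro mult_mono) auto
    also have "\<dots> \<le> B * (2048 / (real (Suc n))\<^sup>2)"
      using mult_left_mono[OF tail[OF that] B_nonneg] by (simp add: mult_ac)
    finally show ?thesis by (simp add: g_def mult.commute)
  qed
  have "summable f"
    by (rule summable_comparison_test'[of g N]) (use f_le g_sums sums_summable in auto)
  then have "rad_series_deriv a t z - (\<Sum>n<N. f n) = (\<Sum>n. f (n + N))"
    unfolding rad_series_deriv_def f_def[symmetric] by (subst suminf_split_initial_segment[of f N]) simp_all
  also have "norm \<dots> \<le> (\<Sum>n. g n)"
  proof (rule norm_suminf_le)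
    have "g (n + N) \<le> g n" for n
      unfolding g_def using B_nonneg by (intro mult_left_mono divide_left_mono) (auto simp: power_mono)
    then show "norm (f (n + N)) \<le> g n" for n
      using f_le[of "n + N"] by (meson le_add2 order_trans)
  qed (use g_sums sums_summable in blast)
  finally show ?thesis unfolding f_def using sums_unique[OF g_sums] by simp
qed

lemma norm_sum_power_diff_le:
  fixes z w :: complex
  assumes b: "\<And>n. n < N \<Longrightarrow> norm (b n) \<le> K" and "norm z \<le> 1" "norm w \<le> 1"
  shows "norm ((\<Sum>n<N. b n * z^n) - (\<Sum>n<N. b n * w^n)) \<le> real N ^ 2 * K * norm (z - w)"
proof -
  have "norm ((\<Sum>n<N. b n * z^n) - (\<Sum>n<N. b n * w^n)) \<le> (\<Sum>n<N. norm (b n) * norm (z^n - w^n))"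
    unfolding sum_subtractf[symmetric] right_diff_distrib[symmetric]
    by (rule order_trans[OF norm_sum]) (simp add: norm_mult)
  also have "\<dots> \<le> (\<Sum>n<N. K * (real N * norm (z - w)))"
  proof (rule sum_mono)
    fix n assume n: "n \<in> {..<N}"
    have "0 \<le> K" using b[of n] n by (meson lessThan_iff norm_ge_zero order_trans)
    have "norm (z^n - w^n) \<le> real n * norm (z - w)" using assms by (intro norm_power_diff) auto
    also have "\<dots> \<le> real N * norm (z - w)" using n by (intro mult_right_mono) auto
    finally show "norm (b n) * norm (z^n - w^n) \<le> K * (real N * norm (z - w))"
      using n b \<open>0 \<le> K\<close> by (intro mult_mono) auto
  qed
  finally show ?thesis by (simp add: power2_eq_square mult_ac)
qed

definition grid_error :: "real \<Rightarrow> real" where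
  "grid_error B = B * (2 * pi + 2048 * (pi\<^sup>2/6))"

text \<open>On \<open>|z| = r\<close> the derivative is controlled by the truncated series on the grid of
  \<open>N\<^sup>3\<close> points: the tail is small by the hypothesis on \<open>r\<^sup>n\<close>, and the grid is fine enough
  that the \<open>N\<^sup>3 B\<close>-Lipschitz truncation moves by at most \<open>2 \<pi> B\<close>.\<close>
lemma rad_series_deriv_near_grid:
  assumes B: "\<And>n. norm (a (Suc n)) \<le> B" and r: "0 \<le> r" "r < 1" and N: "0 < N"
    and tail: "\<And>n. N \<le> n \<Longrightarrow> real (Suc n) * r^n \<le> 2048 / (real (Suc n))\<^sup>2" and z: "norm z = r"
  shows "\<exists>j < N^3. norm (rad_series_deriv a t z) \<le> norm (grid_sum a N (N^3) r j t) + grid_error B"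
proof -
  have B_nonneg: "0 \<le> B" using B[of 0] by (meson norm_ge_zero order_trans)
  define b where "b n = of_real (rademacher (Suc n) t) * deriv_coeff a n" for n
  obtain j where j: "j < N^3" and zj: "norm (z - of_real r * unit_root (N^3) j) \<le> 2 * pi * r / N^3"
    using exists_unit_root_near[OF r(1) _ z, of "N^3"] N by auto
  define w where "w = of_real r * unit_root (N^3) j"
  have "norm (b n) \<le> real N * B" if "n < N" for n
  proof -
    have "norm (deriv_coeff a n) \<le> real (Suc n) * B" using B by (rule norm_deriv_coeff_le)
    also have "\<dots> \<le> real N * B" using that B_nonneg by (intro mult_right_mono) auto
    moreover have "\<bar>rademacher (Suc n) t\<bar> * norm (deriv_coeff a n) \<le> norm (deriv_coeff a n)"
      using rademacher_abs_le by (intro mult_left_le_one_le) auto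
    ultimately show ?thesis unfolding b_def norm_mult norm_of_real by linarith
  qed
  then have "norm ((\<Sum>n<N. b n * z^n) - (\<Sum>n<N. b n * w^n)) \<le> real N ^ 2 * (real N * B) * norm (z - w)"
    using r z by (intro norm_sum_power_diff_le) (auto simp: w_def norm_mult)
  also have "\<dots> = real N ^ 3 * B * norm (z - w)" by (simp add: power2_eq_square power3_eq_cube mult_ac)
  also have "\<dots> \<le> real N ^ 3 * B * (2 * pi * r / N^3)"
    using zj B_nonneg unfolding w_def by (intro mult_left_mono) auto
  also have "\<dots> = 2 * pi * B * r" using N by simp
  also have "\<dots> \<le> 2 * pi * B" using B_nonneg r by (simp add: mult_left_le)
  finally have head: "norm ((\<Sum>n<N. b n * z^n) - grid_sum a N (N^3) r j t) \<le> 2 * pi * B"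
    unfolding grid_sum_def b_def w_def by (simp add: mult.assoc)
  have "norm (rad_series_deriv a t z - (\<Sum>n<N. b n * z^n)) \<le> 2048 * (pi\<^sup>2/6) * B"
    unfolding b_def using norm_rad_series_deriv_tail_le[of a B r N z t] B r tail z by (simp add: mult.assoc)
  from norm_diff_triangle_le[OF this head]
  have "norm (rad_series_deriv a t z - grid_sum a N (N^3) r j t) \<le> grid_error B"
    unfolding grid_error_def by (simp add: algebra_simps)
  then show ?thesis using j norm_triangle_sub[of "rad_series_deriv a t z" "grid_sum a N (N^3) r j t"]
    by (auto intro: order_trans)
qed

section \<open>Dyadic scales\<close>

definition trunc_len :: "nat \<Rightarrow> nat" where
  "trunc_len k = 16^Suc k"

text \<open>The exponent is chosen so that the grid of \<open>(trunc_len k)\<^sup>3\<close> points has exactly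
  \<open>2^(moment_exp k - 1)\<close> elements (lemma \<open>grid_size_eq\<close>).\<close>
definition moment_exp :: "nat \<Rightarrow> nat" where
  "moment_exp k = 12 * k + 13"

definition trunc_variance :: "(nat \<Rightarrow> complex) \<Rightarrow> nat \<Rightarrow> real \<Rightarrow> real" where
  "trunc_variance a k r = (\<Sum>n<trunc_len k. (cmod (deriv_coeff a n))\<^sup>2 * r^(2*n))"

definition level :: "(nat \<Rightarrow> complex) \<Rightarrow> nat \<Rightarrow> real \<Rightarrow> real" where
  "level a k r = 8 * exp 1 * real (moment_exp k) * (trunc_variance a k r + 1)"

definition dyadic_interval :: "nat \<Rightarrow> real set" where
  "dyadic_interval k = {1 - 1/2^k ..< 1 - 1/2^Suc k}"

definition circle_majorant :: "(nat \<Rightarrow> complex) \<Rightarrow> real \<Rightarrow> nat \<Rightarrow> real \<Rightarrow> real \<Rightarrow> real" where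
  "circle_majorant a B k r t = 2 * level a k r + 2 * (grid_error B)\<^sup>2 +
     2 * (\<Sum>j<(trunc_len k)^3. cmod (grid_sum a (trunc_len k) ((trunc_len k)^3) r j t) ^ (2 * moment_exp k))
       / (real (moment_exp k) * level a k r ^ (moment_exp k - 1))"

definition dyadic_majorant :: "(nat \<Rightarrow> complex) \<Rightarrow> real \<Rightarrow> nat \<Rightarrow> real \<Rightarrow> real \<Rightarrow> real" where
  "dyadic_majorant a B k r t = (1 - r) * (ln (1 / (1 - r)))\<^sup>2 * circle_majorant a B k r t"

lemma moment_exp_pos: "0 < moment_exp k"
  by (simp add: moment_exp_def)

lemma grid_size_eq: "real ((trunc_len k)^3) = 2^(moment_exp k - 1)"
proof -
  have "(trunc_len k)^3 = 16^(Suc k * 3)" unfolding trunc_len_def by (simp only: power_mult)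
  also have "\<dots> = ((2::nat)^4)^(Suc k * 3)" by simp
  also have "\<dots> = 2^(moment_exp k - 1)" unfolding moment_exp_def power_mult[symmetric] by simp
  finally show ?thesis by simp
qed

lemma trunc_variance_nonneg: "0 \<le> r \<Longrightarrow> 0 \<le> trunc_variance a k r"
  unfolding trunc_variance_def by (intro sum_nonneg) auto

lemma trunc_variance_mono: "0 \<le> r \<Longrightarrow> r \<le> r' \<Longrightarrow> trunc_variance a k r \<le> trunc_variance a k r'"
  unfolding trunc_variance_def by (intro sum_mono mult_left_mono power_mono) auto

lemma level_pos: "0 \<le> r \<Longrightarrow> 0 < level a k r"
  unfolding level_def using trunc_variance_nonneg[of r a k] moment_exp_pos[of k] by simp

lemma dyadic_interval_bounds:
  assumes "r \<in> dyadic_interval k"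
  shows "0 \<le> r" "r < 1" "1/2^Suc k \<le> 1 - r" "1 - r \<le> 1/2^k"
proof -
  have "1 - 1/2^k \<le> r" "(1::real)/2^k \<le> 1" using assms by (auto simp: dyadic_interval_def)
  then show "0 \<le> r" by linarith
qed (use assms in \<open>auto simp: dyadic_interval_def\<close>)

text \<open>Applied to every grid value \<open>y\<close>, this bounds their maximum by \<open>s\<close> plus the sum of their
  \<open>p\<close>-th powers divided by \<open>p s\<^sup>p\<^sup>-\<^sup>1\<close>.\<close>
lemma le_add_power_div:
  fixes y s :: real
  assumes y: "0 \<le> y" and s: "0 < s" and p: "0 < p"
  shows "y \<le> s + y^p / (p * s^(p - 1))"
proof -
  have "1 + real p * (y/s - 1) \<le> (1 + (y/s - 1))^p"
    by (rule Bernoulli_inequality) (use y s in simp)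
  then have "(s/p) * (1 + real p * (y/s - 1)) \<le> (s/p) * (y/s)^p"
    using s p by (intro mult_left_mono) auto
  moreover have "(s/p) * (1 + real p * (y/s - 1)) = s/p + y - s" using s p by (simp add: field_simps)
  moreover have "(s/p) * (y/s)^p = y^p / (p * s^(p - 1))"
  proof -
    have "s^p = s * s^(p - 1)" using p by (cases p) auto
    then show ?thesis using s p by (simp add: power_divide)
  qed
  moreover have "s/p \<ge> 0" using s by simp
  ultimately show ?thesis by linarith
qed

lemma norm_deriv_rad_series_square_le:
  assumes B: "\<And>n. norm (a (Suc n)) \<le> B" and r: "r \<in> dyadic_interval k" and z: "norm z = r"
  shows "(norm (deriv (rad_series a t) z))\<^sup>2 \<le> circle_majorant a B k r t"
proof -
  note r_bounds = dyadic_interval_bounds[OF r]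
  define N where "N = trunc_len k"
  define p where "p = moment_exp k"
  define s where "s = level a k r"
  define S where "S = (\<Sum>j<N^3. cmod (grid_sum a N (N^3) r j t) ^ (2 * p))"
  have s: "0 < s" unfolding s_def using r_bounds by (intro level_pos)
  have p: "0 < p" unfolding p_def by (rule moment_exp_pos)
  have tail: "\<And>n. N \<le> n \<Longrightarrow> real (Suc n) * r^n \<le> 2048 / (real (Suc n))\<^sup>2"
    unfolding N_def trunc_len_def using r_bounds by (intro Suc_mult_power_le_inverse_square) auto
  obtain j where j: "j < N^3"
    and near: "norm (rad_series_deriv a t z) \<le> norm (grid_sum a N (N^3) r j t) + grid_error B"
    using rad_series_deriv_near_grid[where a=a and B=B and r=r and N=N and t=t and z=z] B r_bounds tail z
    unfolding N_def trunc_len_def by auto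
  define y where "y = (norm (grid_sum a N (N^3) r j t))\<^sup>2"
  have "(norm (rad_series_deriv a t z))\<^sup>2 \<le> (norm (grid_sum a N (N^3) r j t) + grid_error B)\<^sup>2"
    using near by (intro power_mono) auto
  also have "\<dots> \<le> 2 * y + 2 * (grid_error B)\<^sup>2"
  proof -
    have "0 \<le> (norm (grid_sum a N (N^3) r j t) - grid_error B)\<^sup>2" by simp
    then show ?thesis unfolding y_def by (simp add: power2_eq_square algebra_simps)
  qed
  finally have D: "(norm (rad_series_deriv a t z))\<^sup>2 \<le> 2 * y + 2 * (grid_error B)\<^sup>2" .
  have "y^p \<le> S"
    unfolding S_def y_def power_mult[symmetric] using j by (intro member_le_sum) (auto simp: mult.commute)
  then have "y^p / (p * s^(p - 1)) \<le> S / (p * s^(p - 1))"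
    using s p by (intro divide_right_mono) auto
  moreover have "y \<le> s + y^p / (p * s^(p - 1))" by (rule le_add_power_div) (use s p in \<open>auto simp: y_def\<close>)
  moreover have "deriv (rad_series a t) z = rad_series_deriv a t z"
    by (rule deriv_rad_series[where B=B]) (use B z r_bounds in auto)
  ultimately show ?thesis
    unfolding circle_majorant_def S_def N_def p_def s_def using D by simp
qed

lemma weighted_Minf_deriv_le_dyadic_majorant:
  assumes B: "\<And>n. norm (a (Suc n)) \<le> B" and r: "r \<in> dyadic_interval k"
  shows "(1 - r) * (ln (1 / (1 - r)))\<^sup>2 * (Minf r (deriv (rad_series a t)))\<^sup>2 \<le> dyadic_majorant a B k r t"
proof -
  note r_bounds = dyadic_interval_bounds[OF r]
  have "(Minf r (deriv (rad_series a t)))\<^sup>2 \<le> circle_majorant a B k r t"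
  proof (rule Minf_square_le)
    show "(norm (deriv (rad_series a t) z))\<^sup>2 \<le> circle_majorant a B k r t" if "norm z = r" for z
      using B r that by (rule norm_deriv_rad_series_square_le)
  qed (use r_bounds in simp)
  then show ?thesis
    unfolding dyadic_majorant_def using r_bounds by (intro mult_left_mono) auto
qed

lemma unit_mean_affine_sum:
  assumes "finite J" and [measurable]: "\<And>j. Y j \<in> borel_measurable borel"
    and Y_nonneg: "\<And>j t. 0 \<le> Y j t" and "0 \<le> \<alpha>" "0 \<le> c"
  shows "unit_mean (\<lambda>t. ennreal (\<alpha> + c * (\<Sum>j\<in>J. Y j t)))
    = ennreal \<alpha> + ennreal c * (\<Sum>j\<in>J. unit_mean (\<lambda>t. ennreal (Y j t)))"
proof -
  have Y_sum: "ennreal (\<Sum>j\<in>J. Y j t) = (\<Sum>j\<in>J. ennreal (Y j t))" for t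
    using Y_nonneg by (rule sum_ennreal[symmetric])
  have "indicator {0..<1} t * ennreal (\<alpha> + c * (\<Sum>j\<in>J. Y j t))
      = ennreal \<alpha> * indicator {0..<1} t + ennreal c * (\<Sum>j\<in>J. indicator {0..<1} t * ennreal (Y j t))" for t
    using assms Y_sum[of t] by (simp add: ennreal_plus ennreal_mult sum_nonneg indicator_def)
  then have "unit_mean (\<lambda>t. ennreal (\<alpha> + c * (\<Sum>j\<in>J. Y j t)))
      = (\<integral>\<^sup>+t. ennreal \<alpha> * indicator {0..<1} t + ennreal c * (\<Sum>j\<in>J. indicator {0..<1} t * ennreal (Y j t)) \<partial>lborel)"
    by simp
  also have "\<dots> = ennreal \<alpha> + ennreal c * (\<Sum>j\<in>J. unit_mean (\<lambda>t. ennreal (Y j t)))"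
    using emeasure_lborel_Ico[of 0 "1::real"] by (simp add: nn_integral_add nn_integral_cmult nn_integral_sum)
  finally show ?thesis .
qed

lemma unit_mean_grid_sum_power_le:
  assumes "0 < p" "0 \<le> r"
  shows "unit_mean (\<lambda>t. ennreal (cmod (grid_sum a N M r j t) ^ (2*p)))
    \<le> ennreal (4 * (4 * exp 1 * p * (\<Sum>n<N. (cmod (deriv_coeff a n))\<^sup>2 * r^(2*n))) ^ p)"
proof -
  have "(\<Sum>n<N. (cmod (deriv_coeff a n * (of_real r * unit_root M j) ^ n))\<^sup>2)
      = (\<Sum>n<N. (cmod (deriv_coeff a n))\<^sup>2 * r^(2*n))"
    using assms by (simp add: norm_mult norm_power power_mult_distrib power_mult[symmetric] mult.commute)
  moreover have "grid_sum a N M r j t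
      = (\<Sum>n<N. of_real (rademacher (Suc n) t) * (deriv_coeff a n * (of_real r * unit_root M j) ^ n))" for t
    unfolding grid_sum_def by (simp add: mult.assoc)
  ultimately show ?thesis
    using unit_mean_rademacher_partial_sum_even_power_le[OF assms(1),
        where N=N and c="\<lambda>n. deriv_coeff a n * (of_real r * unit_root M j) ^ n"] by simp
qed

text \<open>This is where a count of \<open>2^(p-1)\<close> grid points is paid for: the level exceeds twice the
  typical size \<open>q\<close> of each \<open>p\<close>-th moment.\<close>
lemma two_power_mult_power_le:
  fixes q s :: real
  assumes "0 \<le> q" "2 * q \<le> s" "0 < p"
  shows "2^(p - 1) * q^p \<le> q * s^(p - 1)"
proof -
  have "q^p = q * q^(p - 1)" using assms(3) by (cases p) auto
  also have "\<dots> \<le> q * (s / 2)^(p - 1)" using assms by (intro mult_left_mono power_mono) auto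
  finally show ?thesis by (simp add: power_divide field_simps)
qed

lemma unit_mean_dyadic_majorant_le:
  assumes r: "0 \<le> r" "r < 1"
  shows "unit_mean (\<lambda>t. ennreal (dyadic_majorant a B k r t))
     \<le> ennreal ((1 - r) * (ln (1 / (1 - r)))\<^sup>2 * (2 * level a k r + 2 * (grid_error B)\<^sup>2 + 32 * exp 1 * trunc_variance a k r))"
proof -
  define A where "A = (1 - r) * (ln (1 / (1 - r)))\<^sup>2"
  define p where "p = moment_exp k"
  define s where "s = level a k r"
  define \<sigma> where "\<sigma> = trunc_variance a k r"
  define N where "N = trunc_len k"
  define M where "M = N^3"
  define c where "c = 2 * A / (real p * s ^ (p - 1))"
  define Y where "Y j t = cmod (grid_sum a N M r j t) ^ (2 * p)" for j t
  define m where "m = 4 * (4 * exp 1 * real p * \<sigma>) ^ p"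
  have A: "0 \<le> A" unfolding A_def using r by simp
  have s: "0 < s" unfolding s_def using r by (intro level_pos)
  have p: "0 < p" unfolding p_def by (rule moment_exp_pos)
  have \<sigma>: "0 \<le> \<sigma>" unfolding \<sigma>_def using r by (intro trunc_variance_nonneg)
  have c: "0 \<le> c" unfolding c_def using A s by simp
  have Y_measurable: "Y j \<in> borel_measurable borel" for j unfolding Y_def grid_sum_def by measurable
  have Y: "unit_mean (\<lambda>t. ennreal (Y j t)) \<le> ennreal m" for j
    unfolding Y_def m_def \<sigma>_def trunc_variance_def N_def[symmetric]
    using unit_mean_grid_sum_power_le[OF p r(1)] by simp
  have "dyadic_majorant a B k r t = A * (2 * s + 2 * (grid_error B)\<^sup>2) + c * (\<Sum>j<M. Y j t)" for t
    unfolding dyadic_majorant_def circle_majorant_def A_def c_def Y_def p_def s_def N_def M_def by (simp add: algebra_simps)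
  then have "unit_mean (\<lambda>t. ennreal (dyadic_majorant a B k r t))
      = unit_mean (\<lambda>t. ennreal (A * (2 * s + 2 * (grid_error B)\<^sup>2) + c * (\<Sum>j<M. Y j t)))"
    by simp
  also have "\<dots> = ennreal (A * (2 * s + 2 * (grid_error B)\<^sup>2)) + ennreal c * (\<Sum>j<M. unit_mean (\<lambda>t. ennreal (Y j t)))"
    by (rule unit_mean_affine_sum[OF _ Y_measurable]) (use A s c in \<open>auto simp: Y_def\<close>)
  also have "\<dots> \<le> ennreal (A * (2 * s + 2 * (grid_error B)\<^sup>2)) + ennreal c * (\<Sum>j<M. ennreal m)"
    by (intro add_mono mult_left_mono sum_mono Y) auto
  also have "\<dots> = ennreal (A * (2 * s + 2 * (grid_error B)\<^sup>2) + c * (M * m))"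
    using A s c \<sigma> by (simp add: m_def ennreal_plus ennreal_mult ennreal_of_nat_eq_real_of_nat)
  also have "\<dots> \<le> ennreal (A * (2 * s + 2 * (grid_error B)\<^sup>2) + A * (32 * exp 1 * \<sigma>))"
  proof (intro ennreal_leI add_left_mono)
    have "c * (M * m) = 2 * A / (real p * s ^ (p - 1)) * 4 * (2^(p - 1) * (4 * exp 1 * real p * \<sigma>)^p)"
      unfolding c_def m_def M_def N_def grid_size_eq p_def[symmetric] by (simp add: mult_ac)
    also have "\<dots> \<le> 2 * A / (real p * s ^ (p - 1)) * 4 * ((4 * exp 1 * real p * \<sigma>) * s^(p - 1))"
      using \<sigma> p A s by (intro mult_left_mono two_power_mult_power_le) (auto simp: s_def level_def p_def \<sigma>_def)
    also have "\<dots> = A * (32 * exp 1 * \<sigma>)" using s p by (simp add: field_simps)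
    finally show "c * (M * m) \<le> A * (32 * exp 1 * \<sigma>)" .
  qed
  finally show ?thesis unfolding A_def s_def \<sigma>_def by (simp add: algebra_simps)
qed

section \<open>Summation over the scales\<close>

lemma Suc_cube_le_two_power: "real (Suc k)^3 \<le> 8 * 2^k"
proof -
  have "(Suc k)^3 \<le> 8 * 2^k"
  proof (induction k)
    case (Suc k)
    show ?case
    proof (cases "k < 3")
      case True
      then have "k = 0 \<or> k = 1 \<or> k = 2" by auto
      then show ?thesis by (auto simp: eval_nat_numeral)
    next
      case False
      define m where "m = Suc k"
      have m: "4 \<le> m" using False by (simp add: m_def)
      then have "4 * m \<le> m * m" "4 * (m * m) \<le> m * (m * m)" by (intro mult_right_mono; simp)+
      moreover have "(Suc m)^3 = m * (m * m) + 3 * (m * m) + 3 * m + 1" "m^3 = m * (m * m)"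
        by (simp_all add: power3_eq_cube algebra_simps)
      ultimately have "(Suc m)^3 \<le> 2 * m^3" using m by linarith
      then show ?thesis using Suc.IH unfolding m_def by simp
    qed
  qed simp
  then have "real ((Suc k)^3) \<le> real (8 * 2^k)" by (simp only: of_nat_le_iff)
  then show ?thesis by simp
qed

definition scale_weight :: "nat \<Rightarrow> nat \<Rightarrow> real" where
  "scale_weight n k = real (Suc k)^3 / 4^k * (1 - 1/2^Suc k)^(2*n)"

lemma dyadic_radius_bounds: "0 \<le> 1 - 1/(2::real)^Suc k" "1 - 1/(2::real)^Suc k \<le> 1"
proof -
  have "(1::real) \<le> 2^Suc k" by (rule one_le_power) simp
  then show "0 \<le> 1 - 1/(2::real)^Suc k" "1 - 1/(2::real)^Suc k \<le> 1" by auto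
qed

lemma scale_weight_nonneg: "0 \<le> scale_weight n k"
  unfolding scale_weight_def using dyadic_radius_bounds(1) by simp

lemma scale_weight_le_Suc_cube: "scale_weight n k \<le> real (Suc k)^3 / 4^k"
  unfolding scale_weight_def using dyadic_radius_bounds
  by (intro mult_left_le power_le_one) auto

lemma Suc_cube_div_four_power_le: "real (Suc k)^3 / 4^k \<le> 8 * (1/2)^k"
proof -
  have "(4::real)^k = 2^k * 2^k" by (simp add: power_mult_distrib[symmetric])
  then show ?thesis
    using Suc_cube_le_two_power[of k] by (simp add: power_divide divide_right_mono field_simps)
qed

lemma summable_scale_weight: "summable (scale_weight n)"
proof (rule summable_comparison_test'[of "\<lambda>k. 8 * (1/2)^k" 0])
  show "norm (scale_weight n k) \<le> 8 * (1/2)^k" for k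
    using scale_weight_le_Suc_cube[of n k] Suc_cube_div_four_power_le[of k] scale_weight_nonneg[of n k]
    by simp
qed (intro summable_mult summable_geometric; simp)

lemma scale_weight_head_le:
  assumes K: "2^K \<le> n"
  shows "(\<Sum>k<K. scale_weight n k) \<le> 27 * (real K + 1)^3 / (real n)\<^sup>2"
proof -
  have "1 \<le> n" using K by (meson dual_order.trans one_le_numeral one_le_power)
  then have n: "(2::real)^K \<le> real n" "0 < real n"
    using K by (metis of_nat_le_iff of_nat_numeral of_nat_power, simp)
  have k_term: "scale_weight n k \<le> 27 * (real K + 1)^3 / (real n)^3 * 2^k" if k: "k < K" for k
  proof -
    define y where "y = real n / 2^k"
    have y: "0 < y" unfolding y_def using n by simp
    have "1 - 1/2^Suc k \<le> exp (- (1/(2::real)^Suc k))"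
      using exp_ge_add_one_self[of "- (1/(2::real)^Suc k)"] by simp
    then have "(1 - 1/2^Suc k)^(2*n) \<le> exp (- (1/(2::real)^Suc k))^(2*n)"
      by (intro power_mono) (use dyadic_radius_bounds in auto)
    also have "\<dots> = exp (- y)" unfolding y_def by (simp add: exp_of_nat_mult[symmetric] field_simps)
    also have "\<dots> \<le> 27 / y^3"
      using power_le_exp[of y 3] y by (simp add: exp_minus field_simps)
    finally have "(1 - 1/2^Suc k)^(2*n) \<le> 27 / y^3" .
    moreover have "real (Suc k)^3 \<le> (real K + 1)^3" using k by (intro power_mono) auto
    ultimately have "scale_weight n k \<le> (real K + 1)^3 / 4^k * (27 / y^3)"
      unfolding scale_weight_def by (intro mult_mono divide_right_mono) auto
    also have "\<dots> = 27 * (real K + 1)^3 / (real n)^3 * 2^k"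
    proof -
      have "(4::real)^k = 2^k * 2^k" by (simp add: power_mult_distrib[symmetric])
      then show ?thesis unfolding y_def using n by (simp add: power_divide field_simps power3_eq_cube)
    qed
    finally show ?thesis .
  qed
  have "(\<Sum>k<K. (2::real)^k) \<le> 2^K" by (induction K) auto
  then have geometric: "(\<Sum>k<K. (2::real)^k) \<le> real n" using n by linarith
  have "(\<Sum>k<K. scale_weight n k) \<le> 27 * (real K + 1)^3 / (real n)^3 * (\<Sum>k<K. 2^k)"
    unfolding sum_distrib_left by (intro sum_mono k_term) auto
  also have "\<dots> \<le> 27 * (real K + 1)^3 / (real n)^3 * real n"
    using geometric by (intro mult_left_mono) auto
  also have "\<dots> = 27 * (real K + 1)^3 / (real n)\<^sup>2" using n by (simp add: power3_eq_cube power2_eq_square)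
  finally show ?thesis .
qed

lemma scale_weight_tail_le:
  assumes n: "0 < n" "real n < 2^(K+1)"
  shows "(\<Sum>j. scale_weight n (j + K)) \<le> 64 * (real K + 1)^3 / (real n)\<^sup>2"
proof -
  have term_le: "scale_weight n (j + K) \<le> (real K + 1)^3 / 4^K * (8 * (1/2)^j)" for j
  proof -
    have "scale_weight n (j + K) \<le> real (Suc (j + K))^3 / 4^(j + K)" by (rule scale_weight_le_Suc_cube)
    also have "\<dots> \<le> ((real K + 1) * real (Suc j))^3 / 4^(j + K)"
      by (intro divide_right_mono power_mono) (auto simp: algebra_simps)
    also have "\<dots> = (real K + 1)^3 / 4^K * (real (Suc j)^3 / 4^j)"
      by (simp add: power_mult_distrib power_add)
    also have "\<dots> \<le> (real K + 1)^3 / 4^K * (8 * (1/2)^j)"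
      by (intro mult_left_mono Suc_cube_div_four_power_le) auto
    finally show ?thesis .
  qed
  have "(\<Sum>j. scale_weight n (j + K)) \<le> (\<Sum>j. (real K + 1)^3 / 4^K * (8 * (1/2::real)^j))"
    by (intro suminf_le term_le summable_ignore_initial_segment summable_scale_weight
        summable_mult summable_geometric) auto
  also have "\<dots> = (real K + 1)^3 / 4^K * 16"
  proof -
    have "(\<Sum>j. 8 * (1/2::real)^j) = 16"
      using suminf_geometric[of "1/2::real"] suminf_mult[OF summable_geometric[of "1/2::real"], of 8] by simp
    then show ?thesis by (subst suminf_mult) (auto intro: summable_mult summable_geometric)
  qed
  also have "\<dots> \<le> 64 * (real K + 1)^3 / (real n)\<^sup>2"
  proof -
    have "(real n)\<^sup>2 \<le> (2^(K+1))\<^sup>2" using n by (intro power_mono) auto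
    also have "((2::real)^(K+1))\<^sup>2 = 4 * 4^K" by (simp add: power_mult_distrib[symmetric] power2_eq_square)
    finally show ?thesis using n by (simp add: field_simps)
  qed
  finally show ?thesis .
qed

text \<open>With \<open>2^K \<le> n < 2^(K+1)\<close>, the weights grow geometrically up to the scale \<open>K\<close> and decay
  geometrically beyond it, so the sum is \<open>O(K\<^sup>3 / n\<^sup>2)\<close>: the cube of \<open>K \<approx> log n\<close> is where the
  exponent of the hypothesis comes from.\<close>
lemma suminf_scale_weight_le:
  assumes n: "1 \<le> n"
  shows "suminf (scale_weight n) \<le> 364 * (2 / ln 2)^3 * (ln (real (Suc n)))^3 / (real (Suc n))\<^sup>2"
proof -
  obtain K where K: "2^K \<le> n" "n < 2^(K+1)" using ex_power_ivl1[of 2 n] n by auto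
  have K_real: "(2::real)^K \<le> real n" "real n < 2^(K+1)"
    using K by (metis of_nat_le_iff of_nat_numeral of_nat_power) (metis K(2) of_nat_less_iff of_nat_numeral of_nat_power)
  have "suminf (scale_weight n) = (\<Sum>j. scale_weight n (j + K)) + (\<Sum>k<K. scale_weight n k)"
    by (rule suminf_split_initial_segment[OF summable_scale_weight])
  also have "\<dots> \<le> 91 * (real K + 1)^3 * (1 / (real n)\<^sup>2)"
    using scale_weight_tail_le[OF _ K_real(2)] n scale_weight_head_le[OF K(1)] by simp
  also have "\<dots> \<le> 91 * ((2 / ln 2)^3 * (ln (real (Suc n)))^3) * (4 / (real (Suc n))\<^sup>2)"
  proof (intro mult_mono mult_left_mono)
    have "real K * ln 2 = ln (2^K)" by (simp add: ln_realpow)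
    also have "\<dots> \<le> ln (real (Suc n))"
      using K_real(1) by (intro ln_mono) (linarith, simp)
    finally have "real K * ln 2 \<le> ln (real (Suc n))" .
    moreover have "ln 2 \<le> ln (real (Suc n))" using n by simp
    ultimately have "(real K + 1) * ln 2 \<le> 2 * ln (real (Suc n))"
      unfolding distrib_right mult_1_left by linarith
    then have "real K + 1 \<le> 2 / ln 2 * ln (real (Suc n))" by (simp add: field_simps)
    then show "(real K + 1)^3 \<le> (2 / ln 2)^3 * (ln (real (Suc n)))^3"
      by (metis power_mono power_mult_distrib of_nat_0_le_iff add_nonneg_nonneg zero_le_one)
    have "(real (Suc n))\<^sup>2 \<le> (2 * real n)\<^sup>2" using n by (intro power_mono) auto
    then show "1 / (real n)\<^sup>2 \<le> 4 / (real (Suc n))\<^sup>2" using n by (simp add: field_simps power_mult_distrib)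
  qed auto
  finally show ?thesis by simp
qed

lemma bounded_coeffs_of_summable:
  assumes "summable (\<lambda>n. (norm (a (Suc n)))\<^sup>2 * (ln (real (Suc n))) ^ 3)"
  shows "\<exists>B. \<forall>n. norm (a (Suc n)) \<le> B"
proof -
  define g where "g n = (norm (a (Suc n)))\<^sup>2 * (ln (real (Suc n))) ^ 3" for n
  have "g \<longlonglongrightarrow> 0" unfolding g_def using assms by (rule summable_LIMSEQ_zero)
  then have "Bseq g" using convergent_imp_Bseq convergentI by blast
  then obtain K where K: "0 < K" "\<And>n. norm (g n) \<le> K" by (auto elim: BseqE)
  have "norm (a (Suc (n + 2))) \<le> sqrt K" for n
  proof -
    have "1 \<le> ln (3::real)" using exp_le by (subst ln_ge_iff) auto
    also have "ln 3 \<le> ln (real (Suc (n + 2)))" by simp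
    finally have "1 \<le> (ln (real (Suc (n + 2))))^3" by (simp add: one_le_power)
    then have "(norm (a (Suc (n + 2))))\<^sup>2 \<le> g (n + 2)" unfolding g_def by (simp add: mult_le_cancel_left1)
    also have "\<dots> \<le> K" using K(2)[of "n + 2"] by simp
    finally show ?thesis by (simp add: real_le_rsqrt)
  qed
  then have "Bseq (\<lambda>n. a (Suc (n + 2)))" by (rule BseqI')
  then have "Bseq (\<lambda>n. a (Suc n))" by (rule Bseq_offset)
  then show ?thesis unfolding Bseq_iff by blast
qed

lemma exists_dyadic_interval:
  assumes r: "0 \<le> r" "r < 1"
  shows "\<exists>k. r \<in> dyadic_interval k"
proof -
  define x where "x = 1 / (1 - r)"
  have x: "1 \<le> x" unfolding x_def using r by simp
  define m where "m = nat \<lfloor>x\<rfloor>"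
  have m: "1 \<le> m" "real m \<le> x" "x < real m + 1" unfolding m_def using x by linarith+
  obtain k where k: "2^k \<le> m" "m < 2^(k+1)" using ex_power_ivl1[of 2 m] m(1) by auto
  have "real (2^k) \<le> real m" using k(1) by (simp only: of_nat_le_iff)
  moreover have "real (m + 1) \<le> real (2^(k+1))" using k(2) by (simp only: of_nat_le_iff)
  ultimately have "(2::real)^k \<le> real m" "real m + 1 \<le> 2^Suc k" by simp_all
  then have "(2::real)^k \<le> x" "x < 2^Suc k" using m by linarith+
  moreover have "1 - r = 1 / x" unfolding x_def using r by simp
  ultimately have "1 - r \<le> 1/2^k" "1/2^Suc k < 1 - r"
    using x by (auto simp: frac_le divide_strict_left_mono)
  then show ?thesis unfolding dyadic_interval_def by (intro exI[of _ k]) auto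
qed

lemma emeasure_dyadic_interval: "emeasure lborel (dyadic_interval k) = ennreal (1/2^Suc k)"
proof -
  have "(1::real) - 1/2^k \<le> 1 - 1/2^Suc k" by (simp add: field_simps)
  then have "emeasure lborel (dyadic_interval k) = ennreal ((1 - 1/2^Suc k) - (1 - 1/2^k))"
    unfolding dyadic_interval_def by (rule emeasure_lborel_Ico)
  also have "(1 - 1/2^Suc k) - (1 - 1/(2::real)^k) = 1/2^Suc k" by (simp add: field_simps)
  finally show ?thesis .
qed

lemma dyadic_interval_sets [measurable]: "dyadic_interval k \<in> sets borel"
  unfolding dyadic_interval_def by simp

definition scale_const :: "real \<Rightarrow> real" where
  "scale_const B = 720 + 2 * (grid_error B)\<^sup>2"

definition scale_bound :: "(nat \<Rightarrow> complex) \<Rightarrow> real \<Rightarrow> nat \<Rightarrow> real" where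
  "scale_bound a B k = scale_const B * real (Suc k)^3 / 2^k * (trunc_variance a k (1 - 1/2^Suc k) + 1)"

lemma scale_bound_nonneg: "0 \<le> scale_bound a B k"
  unfolding scale_bound_def scale_const_def
  using trunc_variance_nonneg[OF dyadic_radius_bounds(1), of a k] by simp

lemma circle_mean_bound_le:
  assumes r: "r \<in> dyadic_interval k"
  shows "2 * level a k r + 2 * (grid_error B)\<^sup>2 + 32 * exp 1 * trunc_variance a k r
      \<le> scale_const B * real (Suc k) * (trunc_variance a k (1 - 1/2^Suc k) + 1)"
proof -
  define \<sigma> where "\<sigma> = trunc_variance a k (1 - 1/2^Suc k)"
  define \<sigma>r where "\<sigma>r = trunc_variance a k r"
  define K where "K = real (Suc k)"
  have \<sigma>r: "0 \<le> \<sigma>r" "\<sigma>r \<le> \<sigma>"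
    unfolding \<sigma>r_def \<sigma>_def using dyadic_interval_bounds[OF r]
    by (auto intro: trunc_variance_nonneg trunc_variance_mono)
  have K1: "1 \<le> K" unfolding K_def by simp
  have e3: "exp 1 \<le> (3::real)" by (rule exp_le)
  have "1 * 1 \<le> K * (\<sigma> + 1)" using K1 \<sigma>r by (intro mult_mono) auto
  then have K\<sigma>: "1 \<le> K * (\<sigma> + 1)" by simp
  have "2 * level a k r = 16 * exp 1 * real (moment_exp k) * (\<sigma>r + 1)"
    unfolding level_def \<sigma>r_def by simp
  also have "\<dots> \<le> 16 * 3 * (13 * K) * (\<sigma> + 1)"
    using e3 \<sigma>r by (intro mult_mono) (auto simp: moment_exp_def K_def)
  finally have I1: "2 * level a k r \<le> 624 * K * (\<sigma> + 1)" by simp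
  have "32 * exp 1 \<le> 96 * K" using e3 K1 by linarith
  then have I2: "32 * exp 1 * \<sigma>r \<le> 96 * K * (\<sigma> + 1)" by (rule mult_mono) (use \<sigma>r K1 in auto)
  have I3: "2 * (grid_error B)\<^sup>2 \<le> 2 * (grid_error B)\<^sup>2 * (K * (\<sigma> + 1))"
    using mult_left_mono[OF K\<sigma>, of "2 * (grid_error B)\<^sup>2"] by simp
  have "2 * level a k r + 2 * (grid_error B)\<^sup>2 + 32 * exp 1 * \<sigma>r
      \<le> 624 * K * (\<sigma> + 1) + 2 * (grid_error B)\<^sup>2 * (K * (\<sigma> + 1)) + 96 * K * (\<sigma> + 1)"
    using I1 I2 I3 by linarith
  also have "\<dots> = scale_const B * K * (\<sigma> + 1)" unfolding scale_const_def by (simp add: algebra_simps)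
  finally show ?thesis unfolding K_def \<sigma>_def \<sigma>r_def .
qed

lemma expectation_bound_le_scale_bound:
  assumes r: "r \<in> dyadic_interval k"
  shows "(1 - r) * (ln (1 / (1 - r)))\<^sup>2 * (2 * level a k r + 2 * (grid_error B)\<^sup>2 + 32 * exp 1 * trunc_variance a k r)
      \<le> scale_bound a B k"
proof -
  note r_bounds = dyadic_interval_bounds[OF r]
  define K where "K = real (Suc k)"
  have "ln (1 / (1 - r)) \<le> ln (2^Suc k)" using r_bounds by (intro ln_mono) (auto simp: field_simps)
  also have "\<dots> = K * ln 2" unfolding K_def by (rule ln_realpow)
  also have "\<dots> \<le> K * 1" using ln2_le_25_over_36 by (intro mult_left_mono) (auto simp: K_def)
  finally have "(ln (1 / (1 - r)))\<^sup>2 \<le> K\<^sup>2" using r_bounds by (intro power_mono) auto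
  then have "(1 - r) * (ln (1 / (1 - r)))\<^sup>2 \<le> (1/2^k) * K\<^sup>2"
    using r_bounds by (intro mult_mono) auto
  then have "(1 - r) * (ln (1 / (1 - r)))\<^sup>2 * (2 * level a k r + 2 * (grid_error B)\<^sup>2 + 32 * exp 1 * trunc_variance a k r)
      \<le> (1/2^k) * K\<^sup>2 * (scale_const B * K * (trunc_variance a k (1 - 1/2^Suc k) + 1))"
    by (rule mult_mono[OF _ circle_mean_bound_le[OF r, unfolded K_def[symmetric]]])
       (use level_pos[of r a k] r_bounds trunc_variance_nonneg[of r a k] in auto)
  also have "\<dots> = scale_bound a B k"
    unfolding scale_bound_def K_def by (simp add: power2_eq_square power3_eq_cube)
  finally show ?thesis .
qed

lemma ennreal_suminf_swap: "(\<Sum>k. \<Sum>n. f k n) = (\<Sum>n. \<Sum>k. (f k n :: ennreal))"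
proof -
  have "(\<Sum>k. \<Sum>n. f k n) = (\<Sum>k. \<integral>\<^sup>+n. f k n \<partial>count_space UNIV)"
    by (simp add: nn_integral_count_space_nat)
  also have "\<dots> = (\<integral>\<^sup>+n. (\<Sum>k. f k n) \<partial>count_space UNIV)"
    by (rule nn_integral_suminf[symmetric]) auto
  also have "\<dots> = (\<Sum>n. \<Sum>k. f k n)" by (simp add: nn_integral_count_space_nat)
  finally show ?thesis .
qed

lemma summable_coeff_scale_weight:
  assumes "summable (\<lambda>n. (norm (a (Suc n)))\<^sup>2 * (ln (real (Suc n))) ^ 3)"
  shows "summable (\<lambda>n. (cmod (deriv_coeff a n))\<^sup>2 * suminf (scale_weight n))"
proof (rule summable_comparison_test'[where N=1])
  show "summable (\<lambda>n. 364 * (2 / ln 2)^3 * ((norm (a (Suc n)))\<^sup>2 * (ln (real (Suc n))) ^ 3))"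
    using assms by (rule summable_mult)
  fix n :: nat assume n: "1 \<le> n"
  have coeff: "(cmod (deriv_coeff a n))\<^sup>2 = (real (Suc n))\<^sup>2 * (norm (a (Suc n)))\<^sup>2"
    unfolding deriv_coeff_def norm_mult norm_of_nat by (simp add: power_mult_distrib)
  have "0 \<le> suminf (scale_weight n)"
    by (intro suminf_nonneg summable_scale_weight scale_weight_nonneg)
  then have "norm ((cmod (deriv_coeff a n))\<^sup>2 * suminf (scale_weight n))
      = (cmod (deriv_coeff a n))\<^sup>2 * suminf (scale_weight n)" by simp
  also have "\<dots> \<le> (cmod (deriv_coeff a n))\<^sup>2 * (364 * (2 / ln 2)^3 * (ln (real (Suc n)))^3 / (real (Suc n))\<^sup>2)"
    using suminf_scale_weight_le[OF n] by (rule mult_left_mono) simp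
  also have "\<dots> = 364 * (2 / ln 2)^3 * ((norm (a (Suc n)))\<^sup>2 * (ln (real (Suc n))) ^ 3)"
    unfolding coeff by (simp add: field_simps)
  finally show "norm ((cmod (deriv_coeff a n))\<^sup>2 * suminf (scale_weight n))
      \<le> 364 * (2 / ln 2)^3 * ((norm (a (Suc n)))\<^sup>2 * (ln (real (Suc n))) ^ 3)" .
qed

lemma scale_bound_le_scale_weights:
  "scale_bound a B k / 2^Suc k
     \<le> scale_const B * (scale_weight 0 k + (\<Sum>n<trunc_len k. (cmod (deriv_coeff a n))\<^sup>2 * scale_weight n k))"
proof -
  define u :: real where "u = real (Suc k)^3 / 4^k"
  define \<sigma> where "\<sigma> = trunc_variance a k (1 - 1/2^Suc k)"
  have \<sigma>: "0 \<le> \<sigma>" unfolding \<sigma>_def by (intro trunc_variance_nonneg dyadic_radius_bounds)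
  have sum_eq: "(\<Sum>n<trunc_len k. (cmod (deriv_coeff a n))\<^sup>2 * scale_weight n k) = u * \<sigma>"
    unfolding \<sigma>_def trunc_variance_def scale_weight_def u_def by (simp add: sum_distrib_left mult_ac)
  have weight_eq: "scale_weight 0 k = u" unfolding scale_weight_def u_def by simp
  have bound_eq: "scale_bound a B k / 2^Suc k = scale_const B * (u * (\<sigma> + 1) / 2)"
  proof -
    have "(2::real)^k * 2^Suc k = 2 * 4^k" by (simp add: power_mult_distrib[symmetric])
    then show ?thesis unfolding scale_bound_def u_def \<sigma>_def by (simp add: field_simps)
  qed
  have "u * (\<sigma> + 1) / 2 \<le> u + u * \<sigma>"
  proof -
    have "0 \<le> u" "0 \<le> u * \<sigma>" using \<sigma> unfolding u_def by simp_all
    then show ?thesis by (simp add: field_simps)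
  qed
  then show ?thesis
    unfolding bound_eq sum_eq weight_eq by (rule mult_left_mono) (simp add: scale_const_def)
qed

text \<open>Fubini over the pairs (scale, coefficient): coefficient \<open>n\<close> contributes to all scales
  \<open>k\<close> with \<open>n < trunc_len k\<close>, with total weight \<open>suminf (scale_weight n)\<close>.\<close>
lemma suminf_scale_bound_finite:
  assumes "summable (\<lambda>n. (norm (a (Suc n)))\<^sup>2 * (ln (real (Suc n))) ^ 3)"
  shows "(\<Sum>k. ennreal (scale_bound a B k / 2^Suc k)) < \<infinity>"
proof -
  define C where "C = scale_const B"
  have C: "0 \<le> C" unfolding C_def scale_const_def by simp
  define f where "f k n = ennreal (C * ((cmod (deriv_coeff a n))\<^sup>2 * scale_weight n k))" for k n
  have "ennreal (scale_bound a B k / 2^Suc k) \<le> ennreal (C * scale_weight 0 k) + (\<Sum>n. f k n)" for k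
  proof -
    have "ennreal (scale_bound a B k / 2^Suc k)
        \<le> ennreal (C * scale_weight 0 k + (\<Sum>n<trunc_len k. C * ((cmod (deriv_coeff a n))\<^sup>2 * scale_weight n k)))"
      using scale_bound_le_scale_weights[of a B k] unfolding C_def
      by (intro ennreal_leI) (simp add: distrib_left sum_distrib_left)
    also have "\<dots> = ennreal (C * scale_weight 0 k) + (\<Sum>n<trunc_len k. f k n)"
      unfolding f_def using C scale_weight_nonneg
      by (subst ennreal_plus) (auto intro!: sum_nonneg simp: sum_ennreal)
    also have "(\<Sum>n<trunc_len k. f k n) \<le> (\<Sum>n. f k n)" by (rule sum_le_suminf) auto
    finally show ?thesis by (simp add: add_left_mono)
  qed
  then have "(\<Sum>k. ennreal (scale_bound a B k / 2^Suc k)) \<le> (\<Sum>k. ennreal (C * scale_weight 0 k) + (\<Sum>n. f k n))"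
    by (rule suminf_le) auto
  also have "\<dots> = (\<Sum>k. ennreal (C * scale_weight 0 k)) + (\<Sum>k. \<Sum>n. f k n)"
    by (rule suminf_add[symmetric]) auto
  also have "(\<Sum>k. ennreal (C * scale_weight 0 k)) = ennreal (\<Sum>k. C * scale_weight 0 k)"
    using C by (intro suminf_ennreal2 summable_mult summable_scale_weight) (auto simp: scale_weight_nonneg)
  also have "(\<Sum>k. \<Sum>n. f k n) = (\<Sum>n. \<Sum>k. f k n)" by (rule ennreal_suminf_swap)
  also have "\<dots> = (\<Sum>n. ennreal (C * ((cmod (deriv_coeff a n))\<^sup>2 * suminf (scale_weight n))))"
  proof (rule suminf_cong)
    fix n
    have summable: "summable (\<lambda>k. C * ((cmod (deriv_coeff a n))\<^sup>2 * scale_weight n k))"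
      by (intro summable_mult summable_scale_weight)
    have "(\<Sum>k. f k n) = ennreal (\<Sum>k. C * ((cmod (deriv_coeff a n))\<^sup>2 * scale_weight n k))"
      unfolding f_def using C summable by (intro suminf_ennreal2) (auto simp: scale_weight_nonneg)
    also have "(\<Sum>k. C * ((cmod (deriv_coeff a n))\<^sup>2 * scale_weight n k)) = C * ((cmod (deriv_coeff a n))\<^sup>2 * suminf (scale_weight n))"
      by (simp add: suminf_mult summable_mult summable_scale_weight)
    finally show "(\<Sum>k. f k n) = ennreal (C * ((cmod (deriv_coeff a n))\<^sup>2 * suminf (scale_weight n)))" .
  qed
  also have "\<dots> = ennreal (\<Sum>n. C * ((cmod (deriv_coeff a n))\<^sup>2 * suminf (scale_weight n)))"
    using C summable_coeff_scale_weight[OF assms]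
    by (intro suminf_ennreal2 summable_mult mult_nonneg_nonneg suminf_nonneg summable_scale_weight)
       (auto simp: scale_weight_nonneg)
  finally show ?thesis by (rule le_less_trans) simp
qed

section \<open>Almost every Rademacher series\<close>

definition majorant :: "(nat \<Rightarrow> complex) \<Rightarrow> real \<Rightarrow> real \<Rightarrow> real \<Rightarrow> ennreal" where
  "majorant a B r t = (\<Sum>k. indicator (dyadic_interval k) r * ennreal (dyadic_majorant a B k r t))"

lemma measurable_majorant [measurable]:
  assumes [measurable]: "f \<in> borel_measurable M" "g \<in> borel_measurable M"
  shows "(\<lambda>x. majorant a B (f x) (g x)) \<in> borel_measurable M"
  unfolding majorant_def dyadic_majorant_def circle_majorant_def level_def trunc_variance_def grid_sum_def by measurable

lemma weighted_integrand_le_majorant: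
  assumes B: "\<And>n. norm (a (Suc n)) \<le> B"
  shows "indicator {0<..<1} r * ennreal ((1 - r) * (ln (1 / (1 - r)))\<^sup>2 * (Minf r (deriv (rad_series a t)))\<^sup>2)
    \<le> majorant a B r t"
proof (cases "r \<in> {0<..<1}")
  case True
  then obtain k where k: "r \<in> dyadic_interval k" using exists_dyadic_interval[of r] by auto
  have "ennreal ((1 - r) * (ln (1 / (1 - r)))\<^sup>2 * (Minf r (deriv (rad_series a t)))\<^sup>2)
      \<le> indicator (dyadic_interval k) r * ennreal (dyadic_majorant a B k r t)"
    using weighted_Minf_deriv_le_dyadic_majorant[where a=a and B=B and r=r and k=k and t=t] B k
    by (simp add: ennreal_leI)
  also have "\<dots> \<le> majorant a B r t"
  proof -
    have "F k \<le> suminf F" for F :: "nat \<Rightarrow> ennreal"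
      using sum_le_suminf[of F "{k}"] by auto
    then show ?thesis unfolding majorant_def .
  qed
  finally show ?thesis using True by simp
qed simp

lemma unit_mean_majorant_le:
  "unit_mean (majorant a B r) \<le> (\<Sum>k. indicator (dyadic_interval k) r * ennreal (scale_bound a B k))"
proof -
  have "unit_mean (majorant a B r)
      = (\<Sum>k. indicator (dyadic_interval k) r * unit_mean (\<lambda>t. ennreal (dyadic_majorant a B k r t)))"
    unfolding majorant_def
    by (simp add: ennreal_suminf_cmult[symmetric] nn_integral_suminf nn_integral_cmult mult.left_commute
        dyadic_majorant_def circle_majorant_def level_def trunc_variance_def grid_sum_def)
  also have "\<dots> \<le> (\<Sum>k. indicator (dyadic_interval k) r * ennreal (scale_bound a B k))"
  proof (intro suminf_le)
    fix k
    show "indicator (dyadic_interval k) r * unit_mean (\<lambda>t. ennreal (dyadic_majorant a B k r t))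
        \<le> indicator (dyadic_interval k) r * ennreal (scale_bound a B k)"
    proof (cases "r \<in> dyadic_interval k")
      case True
      note r = dyadic_interval_bounds[OF True]
      have "unit_mean (\<lambda>t. ennreal (dyadic_majorant a B k r t)) \<le> ennreal (scale_bound a B k)"
        using unit_mean_dyadic_majorant_le[OF r(1,2), of a B k] expectation_bound_le_scale_bound[OF True, of a B]
        by (auto intro: order_trans ennreal_leI)
      then show ?thesis by (simp add: True)
    qed simp
  qed auto
  finally show ?thesis .
qed

lemma unit_mean_nn_integral_majorant_finite:
  assumes "summable (\<lambda>n. (norm (a (Suc n)))\<^sup>2 * (ln (real (Suc n))) ^ 3)"
  shows "unit_mean (\<lambda>t. \<integral>\<^sup>+r. majorant a B r t \<partial>lborel) < \<infinity>"
proof -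
  have "unit_mean (\<lambda>t. \<integral>\<^sup>+r. majorant a B r t \<partial>lborel)
      = (\<integral>\<^sup>+t. \<integral>\<^sup>+r. indicator {0..<1} t * majorant a B r t \<partial>lborel \<partial>lborel)"
    by (intro nn_integral_cong nn_integral_cmult[symmetric]) measurable
  also have "\<dots> = (\<integral>\<^sup>+r. unit_mean (majorant a B r) \<partial>lborel)"
    by (rule lborel_pair.Fubini'[where f="\<lambda>r t. indicator {0..<1} t * majorant a B r t"])
       (simp add: case_prod_beta')
  also have "\<dots> \<le> (\<integral>\<^sup>+r. (\<Sum>k. ennreal (scale_bound a B k) * indicator (dyadic_interval k) r) \<partial>lborel)"
    by (intro nn_integral_mono) (simp add: unit_mean_majorant_le mult.commute)
  also have "\<dots> = (\<Sum>k. ennreal (scale_bound a B k) * emeasure lborel (dyadic_interval k))"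
    by (simp add: nn_integral_suminf nn_integral_cmult_indicator)
  also have "\<dots> = (\<Sum>k. ennreal (scale_bound a B k / 2^Suc k))"
    using scale_bound_nonneg by (simp add: emeasure_dyadic_interval ennreal_mult[symmetric])
  also have "\<dots> < \<infinity>" using assms by (rule suminf_scale_bound_finite)
  finally show ?thesis .
qed

theorem mainTheorem12:
  fixes a :: "nat \<Rightarrow> complex"
  assumes "summable (\<lambda>n. (norm (a (Suc n)))\<^sup>2 * (ln (real (Suc n))) ^ 3)"
  shows "AE t in lborel. t \<in> {0..1} \<longrightarrow>
    (\<integral>\<^sup>+ r. indicator {0<..<1} r *
        ennreal ((1 - r) * (ln (1 / (1 - r)))\<^sup>2 * (Minf r (deriv (rad_series a t)))\<^sup>2) \<partial>lborel) < \<infinity>"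
proof -
  obtain B where B: "\<And>n. norm (a (Suc n)) \<le> B" using bounded_coeffs_of_summable[OF assms] by blast
  define \<Psi> where "\<Psi> t = (\<integral>\<^sup>+r. majorant a B r t \<partial>lborel)" for t
  have [measurable]: "\<Psi> \<in> borel_measurable lborel"
    unfolding \<Psi>_def by (rule lborel.borel_measurable_nn_integral) (simp add: case_prod_beta')
  have "AE t in lborel. indicator {0..<1} t * \<Psi> t \<noteq> \<infinity>"
    using unit_mean_nn_integral_majorant_finite[OF assms, of B] unfolding \<Psi>_def[symmetric]
    by (intro nn_integral_PInf_AE) auto
  moreover have "AE t in lborel. t \<noteq> 1" by (rule AE_I'[where N="{1}"]) auto
  ultimately show ?thesis
  proof eventually_elim
    case (elim t)
    show ?case
    proof
      assume "t \<in> {0..1}"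
      then have "\<Psi> t < \<infinity>" using elim by (simp add: less_top)
      then show "(\<integral>\<^sup>+ r. indicator {0<..<1} r *
          ennreal ((1 - r) * (ln (1 / (1 - r)))\<^sup>2 * (Minf r (deriv (rad_series a t)))\<^sup>2) \<partial>lborel) < \<infinity>"
        unfolding \<Psi>_def by (rule le_less_trans[rotated]) (intro nn_integral_mono weighted_integrand_le_majorant B)
    qed
  qed
qed
end
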